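(* Let $M$ be a closed manifold without conjugate points whose universal covering is a visibility manifold. Given $\theta\in T_1M$, $\epsilon>0$ and $t>0$, there exists $\tilde\epsilon_1>0$ such that $\chi(B(\theta,\epsilon,t))\subset B(\chi(\theta),\tilde\epsilon_1,t)$. If moreover $\theta\in\mathcal R_0$, then there exist an open saturated set $D(\theta,\epsilon,t)\subset B(\theta,\epsilon,t)$ containing $\theta$ and $\tilde\epsilon_2>0$ such that $$B(\chi(\theta),\tilde\epsilon_2,t)\subset\chi(D(\theta,\epsilon,t))\subset\chi(B(\theta,\epsilon,t)).$$
   Context: $(M,g)$ closed $C^\infty$ Riemannian manifold without conjugate points, $\tilde M$ universal covering; visibility: for every $z\in\tilde M$, $\epsilon>0$ there is $R$ with $d(z,[x,y])>R\Rightarrow$ angle at $z$ between $[z,x],[z,y]$ is $<\epsilon$. $d\pi:T_1\tilde M\to T_1M$ covering, $d_s$ Sasaki distance, $\Phi=(\phi_t)$ geodesic flow. For $\theta\in T_1\tilde M$, $\tilde{\mathcal F}^s(\theta)=\{(x,-\nabla b_\theta(x)):b_\theta(x)=0\}$, $b_\theta(x)=\lim_{t\to\infty}(d(x,\gamma_\theta(t))-t)$, $\tilde{\mathcal F}^u(\theta)=\{-v:v\in\tilde{\mathcal F}^s(-\theta)\}$; for $\theta\in T_1M$ with lift $\tilde\theta$, $\mathcal F^{s,u}(\theta)=d\pi(\tilde{\mathcal F}^{s,u}(\tilde\theta))$, $\mathcal I(\theta)=\mathcal F^s(\theta)\cap\mathcal F^u(\theta)$, $\mathcal R_0=\{\theta:\mathcal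 I(\theta)=\{\theta\}\}$. $\eta\sim\theta\iff\eta\in\mathcal I(\theta)$; $X=T_1M/\sim$ (quotient topology, compact metric $d$), $\chi$ quotient map, $\Psi=(\psi_t)$ with $\psi_t\circ\chi=\chi\circ\phi_t$. A set $A\subset T_1M$ is saturated if $A=\chi^{-1}(\chi(A))$. Dynamical balls: $B(\theta,\epsilon,t)=\{\eta: d_s(\phi_s\theta,\phi_s\eta)<\epsilon\ \forall s\in[0,t]\}$ in $T_1M$ and $B(x,\epsilon,t)=\{y:d(\psi_sx,\psi_sy)<\epsilon\ \forall s\in[0,t]\}$ in $X$. *)

theory Defs
  imports "HOL-Analysis.Analysis"
begin

definition dyn_ball :: "(real \<Rightarrow> 'a::metric_space \<Rightarrow> 'a) \<Rightarrow> 'a \<Rightarrow> real \<Rightarrow> real \<Rightarrow> 'a set" where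
  "dyn_ball flow x e t = {y. \<forall>s\<in>{0..t}. dist (flow s x) (flow s y) < e}"

definition saturated :: "('a \<Rightarrow> 'b) \<Rightarrow> 'a set \<Rightarrow> bool" where
  "saturated chi A \<longleftrightarrow> A = chi -` (chi ` A)"

definition R0 :: "('a \<Rightarrow> 'a set) \<Rightarrow> 'a set" where
  "R0 I = {\<theta>. I \<theta> = {\<theta>}}"

end

theory Submission
  imports Defs
begin

text \<open>The first inclusion only needs a radius exceeding the diameter of the compact space \<open>X\<close>.
  For the second, joint continuity of the flow and compactness of \<open>[0, t]\<close> make
  \<open>B(\<theta>, \<epsilon>, t)\<close> contain an open neighbourhood \<open>U\<close> of \<open>\<theta>\<close>. The quotient map \<open>\<chi>\<close>, being a continuous map from a
  compact space to a Hausdorff one, is closed, so \<open>V = X - \<chi>(T\<^sub>1M - U)\<close> is open; when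
  \<open>\<theta> \<in> R\<^sub>0\<close> its fibre is \<open>{\<theta>}\<close>, so \<open>\<chi> \<theta> \<in> V\<close>. Then \<open>D = \<chi>\<^sup>-\<^sup>1(V)\<close> is open, saturated and
  contained in \<open>U\<close>, and every dynamical ball around \<open>\<chi> \<theta>\<close> of radius \<open>r\<close> lies in the metric ball of
  radius \<open>r\<close>, hence in \<open>V = \<chi>(D)\<close> for small \<open>r\<close>.\<close>

lemma continuous_on_quotient_map:
  assumes "\<And>U. open U \<longleftrightarrow> open (f -` U)"
  shows "continuous_on UNIV f"
  using assms by (simp add: continuous_on_open_vimage)

lemma dyn_ball_eq_UNIV_if_bounded:
  assumes "bounded (UNIV :: 'a::metric_space set)"
  obtains e where "e > 0" "\<And>x. dyn_ball flow (x :: 'a) e t = UNIV"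
proof -
  obtain a where a: "\<And>x y :: 'a. dist x y \<le> a"
    using assms unfolding bounded_two_points by blast
  have "dist x y < \<bar>a\<bar> + 1" for x y :: 'a
    using a[of x y] by linarith
  then show thesis
    by (intro that[of "\<bar>a\<bar> + 1"]) (auto simp: dyn_ball_def)
qed

lemma dyn_ball_subset_ball:
  assumes "\<And>x. flow 0 x = x" and "t \<ge> 0"
  shows "dyn_ball flow x e t \<subseteq> ball x e"
proof
  fix y
  assume "y \<in> dyn_ball flow x e t"
  then have "dist (flow 0 x) (flow 0 y) < e"
    using \<open>t \<ge> 0\<close> by (auto simp: dyn_ball_def)
  then show "y \<in> ball x e"
    using assms(1) by simp
qed

lemma dyn_ball_contains_open_nbhd:
  fixes flow :: "real \<Rightarrow> 'a::metric_space \<Rightarrow> 'a"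
  assumes cont: "continuous_on UNIV (\<lambda>(s, x). flow s x)" and "e > 0"
  obtains U where "open U" "x \<in> U" "U \<subseteq> dyn_ball flow x e t"
proof -
  define W where "W = {(y, s). dist (flow s x) (flow s y) < e}"
  have flow: "continuous_on UNIV (\<lambda>p. flow (fst p) (snd p))"
    using cont by (simp add: case_prod_unfold)
  have flow_along: "continuous_on UNIV (\<lambda>q. flow (snd q) (g q))"
    if "continuous_on UNIV g" for g :: "'a \<times> real \<Rightarrow> 'a"
  proof -
    have "continuous_on UNIV (\<lambda>q. (snd q, g q))"
      using that by (intro continuous_intros)
    from continuous_on_compose2[OF flow this] show ?thesis by simp
  qed
  have "continuous_on UNIV (\<lambda>(y, s). dist (flow s x) (flow s y))"
    unfolding case_prod_unfold
    by (intro continuous_intros flow_along)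
  then have W_open: "open W"
    unfolding W_def case_prod_unfold by (rule open_Collect_less[OF _ continuous_on_const, simplified])
  have "{x} \<times> {0..t} \<subseteq> W"
    using \<open>e > 0\<close> by (auto simp: W_def)
  then obtain U where "x \<in> U" "open U" and U_W: "U \<times> {0..t} \<subseteq> W"
    by (metis Elementary_Topology.tube_lemma[OF compact_Icc W_open])
  moreover have "U \<subseteq> dyn_ball flow x e t"
    using U_W unfolding W_def dyn_ball_def by blast
  ultimately show thesis
    using that by blast
qed

lemma open_saturated_nbhd_in_open:
  fixes chi :: "'a::topological_space \<Rightarrow> 'b::t2_space"
  assumes "compact (UNIV :: 'a set)"
    and quotient: "\<And>V. open V \<longleftrightarrow> open (chi -` V)" and "surj chi"
    and fibre: "chi -` {chi x} = {x}" and "open U" "x \<in> U"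
  obtains D where "open D" "saturated chi D" "x \<in> D" "D \<subseteq> U" "open (chi ` D)"
proof -
  have "compact (- U)"
    using closed_Int_compact[OF _ \<open>compact UNIV\<close>] \<open>open U\<close> by (simp add: closed_Compl)
  then have "compact (chi ` (- U))"
    using continuous_on_subset[OF continuous_on_quotient_map[OF quotient] subset_UNIV]
    by (intro compact_continuous_image)
  then have "closed (chi ` (- U))"
    by (rule compact_imp_closed)
  define V where "V = - chi ` (- U)"
  define D where "D = chi -` V"
  have image_D: "chi ` D = V"
    unfolding D_def using \<open>surj chi\<close> by (simp add: surj_image_vimage_eq)
  have "open V"
    using \<open>closed (chi ` (- U))\<close> by (simp add: V_def open_Compl)
  have "open D"
    using quotient[of V] \<open>open V\<close> by (simp add: D_def)
  moreover have "saturated chi D"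
    unfolding saturated_def by (auto simp: image_D D_def)
  moreover have "x \<in> D"
    using fibre \<open>x \<in> U\<close> by (auto simp: D_def V_def)
  moreover have "D \<subseteq> U"
    by (auto simp: D_def V_def)
  moreover have "open (chi ` D)"
    using \<open>open V\<close> by (simp add: image_D)
  ultimately show thesis
    using that by blast
qed

theorem mainTheorem15:
  fixes phi :: "real \<Rightarrow> 'a::metric_space \<Rightarrow> 'a"
    and psi :: "real \<Rightarrow> 'b::metric_space \<Rightarrow> 'b"
    and chi :: "'a \<Rightarrow> 'b"
    and I :: "'a \<Rightarrow> 'a set"
    and \<theta> :: 'a and \<epsilon> t :: real
  assumes T1M_compact: "compact (UNIV :: 'a set)"
    and flow_zero: "\<And>x. phi 0 x = x"
    and flow_add: "\<And>s r x. phi (s + r) x = phi s (phi r x)"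
    and flow_cont: "continuous_on UNIV (\<lambda>(s, x). phi s x)"
    and chi_classes: "\<And>\<eta> \<xi>. chi \<eta> = chi \<xi> \<longleftrightarrow> \<eta> \<in> I \<xi>"
    and chi_surj: "surj chi"
    and quotient_topology: "\<And>U. open U \<longleftrightarrow> open (chi -` U)"
    and psi_conj: "\<And>s x. psi s (chi x) = chi (phi s x)"
    and eps_pos: "\<epsilon> > 0" and t_pos: "t > 0"
  shows "(\<exists>e1>0. chi ` dyn_ball phi \<theta> \<epsilon> t \<subseteq> dyn_ball psi (chi \<theta>) e1 t)
       \<and> (\<theta> \<in> R0 I \<longrightarrow>
           (\<exists>D e2. open D \<and> saturated chi D \<and> D \<subseteq> dyn_ball phi \<theta> \<epsilon> t \<and> \<theta> \<in> D \<and> e2 > 0 \<and>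
              dyn_ball psi (chi \<theta>) e2 t \<subseteq> chi ` D \<and>
              chi ` D \<subseteq> chi ` dyn_ball phi \<theta> \<epsilon> t))"
proof (intro conjI impI, goal_cases)
  case 1
  have "continuous_on UNIV chi"
    using quotient_topology by (rule continuous_on_quotient_map)
  then have "compact (UNIV :: 'b set)"
    using compact_continuous_image[OF _ T1M_compact] chi_surj by fastforce
  then obtain e1 where "e1 > 0" "\<And>y. dyn_ball psi y e1 t = UNIV"
    using dyn_ball_eq_UNIV_if_bounded[OF compact_imp_bounded] by blast
  then show ?case
    by blast
next
  case 2
  then have fibre: "chi -` {chi \<theta>} = {\<theta>}"
    using chi_classes by (auto simp: R0_def)
  obtain U where "open U" "\<theta> \<in> U" and U_dyn: "U \<subseteq> dyn_ball phi \<theta> \<epsilon> t"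
    using dyn_ball_contains_open_nbhd[OF flow_cont eps_pos] by blast
  then obtain D where D: "open D" "saturated chi D" "\<theta> \<in> D" "D \<subseteq> U" "open (chi ` D)"
    using open_saturated_nbhd_in_open[OF T1M_compact quotient_topology chi_surj fibre] by blast
  then obtain e2 where "e2 > 0" and ball_D: "ball (chi \<theta>) e2 \<subseteq> chi ` D"
    using openE[OF D(5) imageI[OF D(3)]] by blast
  have "psi 0 y = y" for y
    using chi_surj by (metis flow_zero psi_conj surjD)
  then have "dyn_ball psi (chi \<theta>) e2 t \<subseteq> ball (chi \<theta>) e2"
    using t_pos by (intro dyn_ball_subset_ball) auto
  then have "dyn_ball psi (chi \<theta>) e2 t \<subseteq> chi ` D"
    using ball_D by (rule order_trans)
  moreover have "D \<subseteq> dyn_ball phi \<theta> \<epsilon> t"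
    using D(4) U_dyn by (rule order_trans)
  moreover from this have "chi ` D \<subseteq> chi ` dyn_ball phi \<theta> \<epsilon> t"
    by (rule image_mono)
  ultimately show ?case
    using D(1-3) \<open>e2 > 0\<close> by (intro exI[where x = D] exI[where x = e2]) simp
qed

end
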